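(* Let $A=(B+M)^\top(B+M)$ where $B\in\mathbb{R}^{n\times d}$ has i.i.d. sub-Gaussian rows with parameter $\sigma^2$, zero mean, and covariance matrix $\Sigma$, and $M\in\mathbb{R}^{n\times d}$ satisfies $\|M\|_{1\to2}\le b$; assume $\Sigma$ has a $k$-sparse unit eigenvector for its largest eigenvalue $\lambda_1$ and $\lambda_1-\lambda_2>0$, where $\lambda_2$ is its second largest eigenvalue. Write $A=n\Sigma+E$, i.e. $E:=(B^\top B-n\Sigma)+(M^\top M+M^\top B+B^\top M)$. Then there is an absolute constant $C>0$ such that, with probability at least $1-\mathcal O(d^{-10})$, $$\frac1n\max_{i,j}|E_{ij}|\le C\sigma^2\Big(\sqrt{\tfrac{\log d}{n}}+\tfrac{\log d}{n}\Big)+\frac{b^2}{n}+\frac{2b}{\sqrt n}\sqrt{C\sigma^2\Big(\sqrt{\tfrac{\log d}{n}}+\tfrac{\log d}{n}\Big)+\max_{i\in[d]}\Sigma_{ii}}.$$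
   Context: $\|M\|_{1\to2}$ is the maximal Euclidean norm of a column of $M$. A random vector is sub-Gaussian with parameter $\sigma^2$ if each of its projections onto a unit vector is sub-Gaussian with variance proxy $\sigma^2$. *)

theory Defs
  imports "HOL-Probability.Probability" "Jordan_Normal_Form.Char_Poly" "HOL-Computational_Algebra.Polynomial"
begin

definition subgaussian :: "'a measure \<Rightarrow> ('a \<Rightarrow> real) \<Rightarrow> real \<Rightarrow> bool" where
  "subgaussian P X s2 \<longleftrightarrow> X \<in> borel_measurable P \<and> integrable P X \<and>
     (\<forall>l::real. integrable P (\<lambda>\<omega>. exp (l * (X \<omega> - (\<integral>\<omega>'. X \<omega>' \<partial>P)))) \<and>
        (\<integral>\<omega>. exp (l * (X \<omega> - (\<integral>\<omega>'. X \<omega>' \<partial>P))) \<partial>P) \<le> exp (l\<^sup>2 * s2 / 2))"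

text \<open>Eigenvalues (with multiplicity) of a real matrix whose characteristic polynomial
  splits over the reals (e.g. a symmetric one), listed in non-increasing order.\<close>
definition eigenvalues_desc :: "real mat \<Rightarrow> real list" where
  "eigenvalues_desc A = rev (sorted_list_of_multiset (proots (char_poly A)))"

definition norm_1to2 :: "real mat \<Rightarrow> real" where
  "norm_1to2 M = Max {sqrt (\<Sum>i<dim_row M. (M $$ (i, j))\<^sup>2) | j. j < dim_col M}"

definition row_rv :: "('a \<Rightarrow> real mat) \<Rightarrow> nat \<Rightarrow> nat \<Rightarrow> 'a \<Rightarrow> (nat \<Rightarrow> real)" where
  "row_rv B d i = (\<lambda>\<omega>. restrict (\<lambda>j. B \<omega> $$ (i, j)) {..<d})"

end

theory Submission
  imports Defs
begin

text \<open>An entry of \<open>B\<^sup>T B - n \<Sigma>\<close> is a sum of \<open>n\<close> independent centred products of two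
  coordinates of a row. Products of sub-Gaussian variables are sub-exponential, so Bernstein's
  inequality bounds each entry by \<open>n t\<close> outside an event of probability \<open>2 d\<^sup>-\<^sup>1\<^sup>2\<close>, and a
  union bound over the \<open>d\<^sup>2\<close> entries leaves \<open>2 d\<^sup>-\<^sup>1\<^sup>0\<close>. On the complementary event everything
  is deterministic: by Cauchy-Schwarz the entries of \<open>M\<^sup>T M\<close>, \<open>M\<^sup>T B\<close> and \<open>B\<^sup>T M\<close> are bounded by
  products of column norms, those of \<open>M\<close> by \<open>b\<close> and those of \<open>B\<close> by \<open>sqrt (n (t + max \<Sigma>\<^sub>i\<^sub>i))\<close>,
  read off the diagonal of \<open>B\<^sup>T B\<close>.\<close>

section \<open>Sub-Gaussian and sub-exponential moments\<close>

lemma exp_upper_Taylor_quadratic_abs: "exp (x::real) \<le> 1 + x + x\<^sup>2 * exp \<bar>x\<bar>"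
proof -
  obtain t where t: "\<bar>t\<bar> \<le> \<bar>x\<bar>" "exp x = (\<Sum>m<2. x ^ m / fact m) + exp t / fact 2 * x ^ 2"
    using Maclaurin_exp_le[of x 2] by blast
  have "t \<le> \<bar>x\<bar>"
    using t(1) abs_ge_self[of t] by linarith
  hence "exp t \<le> exp \<bar>x\<bar>"
    by simp
  hence "exp t / 2 \<le> exp \<bar>x\<bar>"
    using exp_gt_zero[of t] by linarith
  hence "exp t / 2 * x\<^sup>2 \<le> x\<^sup>2 * exp \<bar>x\<bar>"
    by (metis mult.commute mult_left_mono zero_le_power2)
  moreover have "exp x = 1 + x + exp t / 2 * x\<^sup>2"
    using t(2) by (simp add: numeral_2_eq_2)
  ultimately show ?thesis by linarith
qed

lemma square_le_exp_half:
  assumes "(u::real) \<ge> 0"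
  shows "u\<^sup>2 \<le> 8 * exp (u / 2)"
proof -
  have "1 + u / 2 + (u / 2)\<^sup>2 / 2 \<le> exp (u / 2)"
    using exp_lower_Taylor_quadratic[of "u / 2"] assms by simp
  thus ?thesis using assms by (simp add: power_divide)
qed

lemma exp_square_le_exp_linear:
  fixes y s :: real
  assumes s: "s > 0"
  defines "h \<equiv> sqrt (8 * s)"
  defines "m \<equiv> nat \<lfloor>\<bar>y\<bar> / h\<rfloor>"
  defines "a \<equiv> real m * h / (2 * s)"
  shows "exp (y\<^sup>2 / (4 * s)) \<le> exp 2 * exp (- 2 * (real m)\<^sup>2) * (exp (a * y) + exp (- a * y))"
proof -
  have h: "h > 0" "h\<^sup>2 = 8 * s"
    using s by (simp_all add: h_def)
  have "real m \<le> \<bar>y\<bar> / h" "\<bar>y\<bar> / h < real m + 1"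
    using h(1) by (auto simp: m_def)
  hence "real m * h \<le> \<bar>y\<bar>" "\<bar>y\<bar> < real m * h + h"
    using h(1) by (simp_all add: field_simps)
  \<comment> \<open>complete the square around the mesh point \<open>m h\<close> just below \<open>\<bar>y\<bar>\<close>\<close>
  hence "(\<bar>y\<bar> - real m * h)\<^sup>2 \<le> h\<^sup>2"
    by (intro power_mono) auto
  hence "y\<^sup>2 \<le> 8 * s + 2 * real m * h * \<bar>y\<bar> - (real m)\<^sup>2 * (8 * s)"
    unfolding h(2)[symmetric] by (simp add: power2_eq_square algebra_simps)
  hence "y\<^sup>2 / (4 * s) \<le> 2 + a * \<bar>y\<bar> - 2 * (real m)\<^sup>2"
    using s by (simp add: a_def field_simps)
  hence "exp (y\<^sup>2 / (4 * s)) \<le> exp (2 + a * \<bar>y\<bar> - 2 * (real m)\<^sup>2)"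
    by simp
  also have "\<dots> = exp 2 * exp (- 2 * (real m)\<^sup>2) * exp (a * \<bar>y\<bar>)"
    by (simp add: exp_add[symmetric] exp_diff)
  also have "exp (a * \<bar>y\<bar>) \<le> exp (a * y) + exp (- a * y)"
    by (cases "y \<ge> 0") (auto simp: add_increasing2 add_increasing)
  finally show ?thesis by (simp add: mult_left_mono)
qed

lemma exp_neg_square_le_half_power: "exp (- real m * real m) \<le> (1 / 2 :: real) ^ m"
proof -
  have "exp (- real m * real m) \<le> exp (- real m)"
    by (cases m) auto
  also have "\<dots> = exp (- 1) ^ m"
    by (simp add: exp_of_nat_mult[symmetric])
  also have "\<dots> \<le> (1 / 2) ^ m"
    using exp_ge_add_one_self[of 1] by (intro power_mono) (auto simp: exp_minus field_simps)
  finally show ?thesis .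
qed

lemma exp_abs_mult_sub_le:
  fixes x y \<mu> K c :: real
  assumes K: "K > 0" and \<mu>: "\<bar>\<mu>\<bar> \<le> K * c"
  shows "exp (\<bar>x * y - \<mu>\<bar> / (2 * K)) \<le> exp (c / 2) * (exp (x\<^sup>2 / K) + exp (y\<^sup>2 / K)) / 2"
proof -
  define p where "p = exp (x\<^sup>2 / (4 * K))"
  define q where "q = exp (y\<^sup>2 / (4 * K))"
  have "\<bar>x * y\<bar> \<le> (x\<^sup>2 + y\<^sup>2) / 2"
    using sum_squares_bound[of "\<bar>x\<bar>" "\<bar>y\<bar>"] by (simp add: abs_mult)
  hence "\<bar>x * y - \<mu>\<bar> \<le> (x\<^sup>2 + y\<^sup>2) / 2 + K * c"
    using \<mu> abs_triangle_ineq4[of "x * y" \<mu>] by linarith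
  hence "\<bar>x * y - \<mu>\<bar> / (2 * K) \<le> x\<^sup>2 / (4 * K) + y\<^sup>2 / (4 * K) + c / 2"
    using K by (simp add: field_simps)
  hence "exp (\<bar>x * y - \<mu>\<bar> / (2 * K)) \<le> exp (c / 2) * (p * q)"
    by (simp add: p_def q_def mult_exp_exp)
  also have "p * q \<le> (p\<^sup>2 + q\<^sup>2) / 2"
    using sum_squares_bound[of p q] by simp
  also have "p\<^sup>2 + q\<^sup>2 \<le> exp (x\<^sup>2 / K) + exp (y\<^sup>2 / K)"
    using K unfolding p_def q_def by (intro add_mono) (simp_all add: frac_le flip: exp_of_nat_mult)
  finally show ?thesis
    by (simp add: mult_left_mono divide_right_mono)
qed

lemma exp_le_quadratic_exp_abs:
  fixes c l z :: real
  assumes c: "c > 0" and l: "\<bar>l\<bar> \<le> 1 / (2 * c)"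
  shows "exp (l * z) \<le> 1 + l * z + 8 * c\<^sup>2 * l\<^sup>2 * exp (\<bar>z\<bar> / c)"
proof -
  have abs_lz: "\<bar>l * z\<bar> \<le> \<bar>z\<bar> / (2 * c)"
    using mult_right_mono[OF l, of "\<bar>z\<bar>"] by (simp add: abs_mult)
  have "z\<^sup>2 = c\<^sup>2 * (\<bar>z\<bar> / c)\<^sup>2"
    using c by (simp add: power_divide)
  also have "\<dots> \<le> c\<^sup>2 * (8 * exp (\<bar>z\<bar> / (2 * c)))"
    using square_le_exp_half[of "\<bar>z\<bar> / c"] c by (intro mult_left_mono) (auto simp: mult.commute)
  finally have "z\<^sup>2 * exp \<bar>l * z\<bar> \<le> 8 * c\<^sup>2 * exp (\<bar>z\<bar> / (2 * c)) * exp (\<bar>z\<bar> / (2 * c))"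
    using abs_lz by (intro mult_mono) auto
  also have "\<dots> = 8 * c\<^sup>2 * exp (\<bar>z\<bar> / c)"
    by (simp add: mult.assoc flip: exp_add)
  finally have "(l * z)\<^sup>2 * exp \<bar>l * z\<bar> \<le> 8 * c\<^sup>2 * l\<^sup>2 * exp (\<bar>z\<bar> / c)"
    using mult_left_mono[of _ _ "l\<^sup>2"] by (fastforce simp: power_mult_distrib ac_simps)
  thus ?thesis
    using exp_upper_Taylor_quadratic_abs[of "l * z"] by linarith
qed

context prob_space
begin

lemma subgaussian_measurable: "subgaussian M X s \<Longrightarrow> X \<in> borel_measurable M"
  by (simp add: subgaussian_def)

lemma subgaussian_mono: "subgaussian M X s \<Longrightarrow> s \<le> s' \<Longrightarrow> subgaussian M X s'"
  unfolding subgaussian_def by (auto intro: order.trans simp: mult_left_mono divide_right_mono)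

lemma subgaussian_centered_mgf:
  assumes "subgaussian M Y s" "expectation Y = 0"
  shows "integrable M (\<lambda>\<omega>. exp (l * Y \<omega>))" "expectation (\<lambda>\<omega>. exp (l * Y \<omega>)) \<le> exp (l\<^sup>2 * s / 2)"
  using assms by (auto simp: subgaussian_def)

lemma subgaussian_expectation_exp_pm_le:
  assumes "subgaussian M Y s" "expectation Y = 0"
  shows "integrable M (\<lambda>\<omega>. exp (a * Y \<omega>) + exp (- a * Y \<omega>))"
    and "expectation (\<lambda>\<omega>. exp (a * Y \<omega>) + exp (- a * Y \<omega>)) \<le> 2 * exp (a\<^sup>2 * s / 2)"
  using subgaussian_centered_mgf[OF assms, of a] subgaussian_centered_mgf[OF assms, of "- a"] by auto

lemma subgaussian_nn_integral_exp_square_le: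
  assumes sg: "subgaussian M Y s" and mean: "expectation Y = 0" and s: "s > 0"
  shows "(\<integral>\<^sup>+\<omega>. exp ((Y \<omega>)\<^sup>2 / (4 * s)) \<partial>M) \<le> ennreal (4 * exp 2)"
proof -
  have [measurable]: "Y \<in> borel_measurable M"
    using sg by (rule subgaussian_measurable)
  \<comment> \<open>dominate \<open>exp (Y\<^sup>2 / 4 s)\<close> by a series of exponentials of \<open>\<plusminus>Y\<close>, whose expectations
    are controlled by the moment generating function\<close>
  define a where "a m = real m * sqrt (8 * s) / (2 * s)" for m :: nat
  define g where "g m \<omega> = exp 2 * exp (- 2 * (real m)\<^sup>2) * (exp (a m * Y \<omega>) + exp (- a m * Y \<omega>))"
    for m \<omega>
  have "ennreal (exp ((Y \<omega>)\<^sup>2 / (4 * s))) \<le> (\<Sum>m. ennreal (g m \<omega>))" for \<omega>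
  proof -
    let ?m = "nat \<lfloor>\<bar>Y \<omega>\<bar> / sqrt (8 * s)\<rfloor>"
    have "ennreal (exp ((Y \<omega>)\<^sup>2 / (4 * s))) \<le> ennreal (g ?m \<omega>)"
      using exp_square_le_exp_linear[OF s, of "Y \<omega>"] by (simp add: g_def a_def ennreal_leI)
    also have "\<dots> \<le> (\<Sum>m. ennreal (g m \<omega>))"
      using sum_le_suminf[OF summableI, of "{?m}" "\<lambda>m. ennreal (g m \<omega>)"] by simp
    finally show ?thesis .
  qed
  hence "(\<integral>\<^sup>+\<omega>. exp ((Y \<omega>)\<^sup>2 / (4 * s)) \<partial>M) \<le> (\<integral>\<^sup>+\<omega>. (\<Sum>m. ennreal (g m \<omega>)) \<partial>M)"
    by (intro nn_integral_mono)
  also have "\<dots> = (\<Sum>m. \<integral>\<^sup>+\<omega>. g m \<omega> \<partial>M)"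
    by (rule nn_integral_suminf) (simp add: g_def)
  also have "\<dots> \<le> (\<Sum>m. ennreal (2 * exp 2 * (1 / 2) ^ m))"
  proof (intro suminf_le summableI)
    fix m
    note pm = subgaussian_expectation_exp_pm_le[OF sg mean, of "a m"]
    have "(a m)\<^sup>2 * s / 2 = (real m)\<^sup>2"
      using s by (simp add: a_def power_mult_distrib power_divide) (simp add: power2_eq_square field_simps)
    hence "expectation (g m) \<le> exp 2 * exp (- 2 * (real m)\<^sup>2) * (2 * exp ((real m)\<^sup>2))"
      using pm by (simp add: g_def[abs_def])
    also have "\<dots> = 2 * exp 2 * exp (- real m * real m)"
      by (simp add: power2_eq_square exp_add[symmetric] algebra_simps)
    also have "\<dots> \<le> 2 * exp 2 * (1 / 2) ^ m"
      using exp_neg_square_le_half_power[of m] by simp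
    finally show "(\<integral>\<^sup>+\<omega>. g m \<omega> \<partial>M) \<le> ennreal (2 * exp 2 * (1 / 2) ^ m)"
      using pm(1) by (subst nn_integral_eq_integral) (auto simp: g_def[abs_def] ennreal_leI)
  qed
  also have "\<dots> = ennreal (\<Sum>m. 2 * exp 2 * (1 / 2) ^ m)"
    by (intro suminf_ennreal2) (auto intro!: summable_mult summable_geometric)
  also have "(\<Sum>m. 2 * exp 2 * (1 / 2 :: real) ^ m) = 4 * exp 2"
    using suminf_mult[OF summable_geometric[of "1 / 2 :: real"], of "2 * exp 2"]
      suminf_geometric[of "1 / 2 :: real"] by simp
  finally show ?thesis .
qed

lemma subgaussian_exp_square_integral_le:
  assumes sg: "subgaussian M Y s" and mean: "expectation Y = 0" and s: "s > 0"
  shows "integrable M (\<lambda>\<omega>. exp ((Y \<omega>)\<^sup>2 / (4 * s)))"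
    and "expectation (\<lambda>\<omega>. exp ((Y \<omega>)\<^sup>2 / (4 * s))) \<le> 4 * exp 2"
proof -
  have [measurable]: "Y \<in> borel_measurable M"
    using sg by (rule subgaussian_measurable)
  note bound = subgaussian_nn_integral_exp_square_le[OF assms]
  show "integrable M (\<lambda>\<omega>. exp ((Y \<omega>)\<^sup>2 / (4 * s)))"
    using bound by (intro integrableI_nonneg) (auto simp: top.not_eq_extremum intro: le_less_trans)
  have "expectation (\<lambda>\<omega>. exp ((Y \<omega>)\<^sup>2 / (4 * s))) = enn2real (\<integral>\<^sup>+\<omega>. exp ((Y \<omega>)\<^sup>2 / (4 * s)) \<partial>M)"
    by (rule integral_eq_nn_integral) auto
  also have "\<dots> \<le> 4 * exp 2"
    using bound by (simp add: enn2real_leI)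
  finally show "expectation (\<lambda>\<omega>. exp ((Y \<omega>)\<^sup>2 / (4 * s))) \<le> 4 * exp 2" .
qed

lemma abs_expectation_mult_le:
  fixes Y1 Y2 :: "'a \<Rightarrow> real" and K c :: real
  assumes K: "K > 0"
    and int1: "integrable M (\<lambda>\<omega>. exp ((Y1 \<omega>)\<^sup>2 / K))"
    and exp1: "expectation (\<lambda>\<omega>. exp ((Y1 \<omega>)\<^sup>2 / K)) \<le> c"
    and int2: "integrable M (\<lambda>\<omega>. exp ((Y2 \<omega>)\<^sup>2 / K))"
    and exp2: "expectation (\<lambda>\<omega>. exp ((Y2 \<omega>)\<^sup>2 / K)) \<le> c"
    and int12: "integrable M (\<lambda>\<omega>. Y1 \<omega> * Y2 \<omega>)"
  shows "\<bar>expectation (\<lambda>\<omega>. Y1 \<omega> * Y2 \<omega>)\<bar> \<le> K * c"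
proof -
  have square_le: "y\<^sup>2 \<le> K * exp (y\<^sup>2 / K)" for y
    using exp_ge_add_one_self[of "y\<^sup>2 / K"] K by (simp add: field_simps)
  have "\<bar>expectation (\<lambda>\<omega>. Y1 \<omega> * Y2 \<omega>)\<bar> \<le> expectation (\<lambda>\<omega>. \<bar>Y1 \<omega> * Y2 \<omega>\<bar>)"
    using integral_abs_bound by blast
  also have "\<dots> \<le> expectation (\<lambda>\<omega>. K * (exp ((Y1 \<omega>)\<^sup>2 / K) + exp ((Y2 \<omega>)\<^sup>2 / K)) / 2)"
  proof (rule integral_mono)
    fix \<omega>
    show "\<bar>Y1 \<omega> * Y2 \<omega>\<bar> \<le> K * (exp ((Y1 \<omega>)\<^sup>2 / K) + exp ((Y2 \<omega>)\<^sup>2 / K)) / 2"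
      using sum_squares_bound[of "\<bar>Y1 \<omega>\<bar>" "\<bar>Y2 \<omega>\<bar>"] square_le[of "Y1 \<omega>"] square_le[of "Y2 \<omega>"]
      by (simp add: abs_mult distrib_left)
  qed (use int12 int1 int2 in auto)
  also have "\<dots> \<le> K * c"
    using int1 int2 exp1 exp2 K by simp
  finally show ?thesis .
qed

lemma exp_abs_product_integral_le:
  fixes Y1 Y2 :: "'a \<Rightarrow> real" and K c :: real
  assumes [measurable]: "Y1 \<in> borel_measurable M" "Y2 \<in> borel_measurable M" and K: "K > 0"
    and int1: "integrable M (\<lambda>\<omega>. exp ((Y1 \<omega>)\<^sup>2 / K))"
    and exp1: "expectation (\<lambda>\<omega>. exp ((Y1 \<omega>)\<^sup>2 / K)) \<le> c"
    and int2: "integrable M (\<lambda>\<omega>. exp ((Y2 \<omega>)\<^sup>2 / K))"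
    and exp2: "expectation (\<lambda>\<omega>. exp ((Y2 \<omega>)\<^sup>2 / K)) \<le> c"
    and int12: "integrable M (\<lambda>\<omega>. Y1 \<omega> * Y2 \<omega>)"
  defines "\<mu> \<equiv> expectation (\<lambda>\<omega>. Y1 \<omega> * Y2 \<omega>)"
  shows "integrable M (\<lambda>\<omega>. exp (\<bar>Y1 \<omega> * Y2 \<omega> - \<mu>\<bar> / (2 * K)))"
    and "expectation (\<lambda>\<omega>. exp (\<bar>Y1 \<omega> * Y2 \<omega> - \<mu>\<bar> / (2 * K))) \<le> exp (c / 2) * c"
proof -
  define W where "W \<omega> = exp (c / 2) * (exp ((Y1 \<omega>)\<^sup>2 / K) + exp ((Y2 \<omega>)\<^sup>2 / K)) / 2" for \<omega>
  have intW: "integrable M W" and expW: "expectation W \<le> exp (c / 2) * c"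
    using int1 int2 exp1 exp2 by (simp_all add: W_def[abs_def])
  have W_bound: "exp (\<bar>Y1 \<omega> * Y2 \<omega> - \<mu>\<bar> / (2 * K)) \<le> W \<omega>" for \<omega>
    unfolding W_def
    by (rule exp_abs_mult_sub_le[OF K abs_expectation_mult_le[OF K int1 exp1 int2 exp2 int12, folded \<mu>_def]])
  show int: "integrable M (\<lambda>\<omega>. exp (\<bar>Y1 \<omega> * Y2 \<omega> - \<mu>\<bar> / (2 * K)))"
    using order_trans[OF W_bound abs_ge_self]
    by (intro Bochner_Integration.integrable_bound[OF intW] AE_I2) auto
  have "expectation (\<lambda>\<omega>. exp (\<bar>Y1 \<omega> * Y2 \<omega> - \<mu>\<bar> / (2 * K))) \<le> expectation W"
    using int intW W_bound by (rule integral_mono)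
  also note expW
  finally show "expectation (\<lambda>\<omega>. exp (\<bar>Y1 \<omega> * Y2 \<omega> - \<mu>\<bar> / (2 * K))) \<le> exp (c / 2) * c" .
qed

lemma centered_mgf_le_of_exp_abs_integral:
  fixes Z :: "'a \<Rightarrow> real" and c D l :: real
  assumes [measurable]: "Z \<in> borel_measurable M" and intZ: "integrable M Z"
    and mean: "expectation Z = 0" and c: "c > 0"
    and int_exp: "integrable M (\<lambda>\<omega>. exp (\<bar>Z \<omega>\<bar> / c))"
    and exp_le: "expectation (\<lambda>\<omega>. exp (\<bar>Z \<omega>\<bar> / c)) \<le> D"
    and l: "\<bar>l\<bar> \<le> 1 / (2 * c)"
  shows "integrable M (\<lambda>\<omega>. exp (l * Z \<omega>))"
    and "expectation (\<lambda>\<omega>. exp (l * Z \<omega>)) \<le> exp (8 * c\<^sup>2 * D * l\<^sup>2)"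
proof -
  have abs_lZ: "\<bar>l * Z \<omega>\<bar> \<le> \<bar>Z \<omega>\<bar> / (2 * c)" for \<omega>
    using mult_right_mono[OF l, of "\<bar>Z \<omega>\<bar>"] by (simp add: abs_mult)
  show int: "integrable M (\<lambda>\<omega>. exp (l * Z \<omega>))"
  proof (intro Bochner_Integration.integrable_bound[OF int_exp] AE_I2)
    fix \<omega>
    have "\<bar>Z \<omega>\<bar> / (2 * c) \<le> \<bar>Z \<omega>\<bar> / c"
      using c by (simp add: frac_le)
    hence "l * Z \<omega> \<le> \<bar>Z \<omega>\<bar> / c"
      using abs_lZ[of \<omega>] abs_ge_self[of "l * Z \<omega>"] by linarith
    thus "norm (exp (l * Z \<omega>)) \<le> norm (exp (\<bar>Z \<omega>\<bar> / c))"
      by simp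
  qed simp
  have "expectation (\<lambda>\<omega>. exp (l * Z \<omega>))
      \<le> expectation (\<lambda>\<omega>. 1 + l * Z \<omega> + 8 * c\<^sup>2 * l\<^sup>2 * exp (\<bar>Z \<omega>\<bar> / c))"
    using int intZ int_exp exp_le_quadratic_exp_abs[OF c l] by (intro integral_mono) auto
  also have "\<dots> = 1 + 8 * c\<^sup>2 * l\<^sup>2 * expectation (\<lambda>\<omega>. exp (\<bar>Z \<omega>\<bar> / c))"
    using intZ int_exp mean by (simp add: prob_space)
  also have "\<dots> \<le> 1 + 8 * c\<^sup>2 * D * l\<^sup>2"
    using mult_left_mono[OF exp_le, of "8 * c\<^sup>2 * l\<^sup>2"] by (simp add: ac_simps)
  also have "\<dots> \<le> exp (8 * c\<^sup>2 * D * l\<^sup>2)"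
    by (rule exp_ge_add_one_self)
  finally show "expectation (\<lambda>\<omega>. exp (l * Z \<omega>)) \<le> exp (8 * c\<^sup>2 * D * l\<^sup>2)" .
qed

end

text \<open>The factor \<open>8 c\<^sup>2 D\<close> of \<open>centered_mgf_le_of_exp_abs_integral\<close> for \<open>c = 8 s\<close> and
  \<open>D = 4 e\<^sup>2 exp (2 e\<^sup>2)\<close>, divided by \<open>s\<^sup>2\<close>.\<close>
definition subexp_const :: real where
  "subexp_const = 2048 * exp 2 * exp (2 * exp 2)"

lemma subexp_const_pos: "subexp_const > 0"
  by (simp add: subexp_const_def)

context prob_space
begin

lemma subgaussian_product_mgf_le:
  fixes Y1 Y2 :: "'a \<Rightarrow> real" and s l :: real
  assumes sg1: "subgaussian M Y1 s" and sg2: "subgaussian M Y2 s"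
    and mean1: "expectation Y1 = 0" and mean2: "expectation Y2 = 0" and s: "s > 0"
    and int12: "integrable M (\<lambda>\<omega>. Y1 \<omega> * Y2 \<omega>)" and l: "\<bar>l\<bar> \<le> 1 / (16 * s)"
  defines "\<mu> \<equiv> expectation (\<lambda>\<omega>. Y1 \<omega> * Y2 \<omega>)"
  shows "integrable M (\<lambda>\<omega>. exp (l * (Y1 \<omega> * Y2 \<omega> - \<mu>)))"
    and "expectation (\<lambda>\<omega>. exp (l * (Y1 \<omega> * Y2 \<omega> - \<mu>))) \<le> exp (subexp_const * l\<^sup>2 * s\<^sup>2)"
proof -
  have [measurable]: "Y1 \<in> borel_measurable M" "Y2 \<in> borel_measurable M"
    using sg1 sg2 by (simp_all add: subgaussian_measurable)
  define c0 :: real where "c0 = 4 * exp 2"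
  note psi2 = exp_abs_product_integral_le[where K = "4 * s" and c = c0,
      OF _ _ _ subgaussian_exp_square_integral_le(1)[OF sg1 mean1 s]
      subgaussian_exp_square_integral_le(2)[OF sg1 mean1 s, folded c0_def]
      subgaussian_exp_square_integral_le(1)[OF sg2 mean2 s]
      subgaussian_exp_square_integral_le(2)[OF sg2 mean2 s, folded c0_def] int12]
  have psi1: "integrable M (\<lambda>\<omega>. exp (\<bar>Y1 \<omega> * Y2 \<omega> - \<mu>\<bar> / (8 * s)))"
    "expectation (\<lambda>\<omega>. exp (\<bar>Y1 \<omega> * Y2 \<omega> - \<mu>\<bar> / (8 * s))) \<le> exp (c0 / 2) * c0"
    using psi2 s by (simp_all add: \<mu>_def)
  have centered: "integrable M (\<lambda>\<omega>. Y1 \<omega> * Y2 \<omega> - \<mu>)" "expectation (\<lambda>\<omega>. Y1 \<omega> * Y2 \<omega> - \<mu>) = 0"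
    using int12 by (simp_all add: \<mu>_def prob_space)
  have l': "\<bar>l\<bar> \<le> 1 / (2 * (8 * s))"
    using l by simp
  note mgf = centered_mgf_le_of_exp_abs_integral[OF _ centered _ psi1 l']
  show "integrable M (\<lambda>\<omega>. exp (l * (Y1 \<omega> * Y2 \<omega> - \<mu>)))"
    using mgf(1) s by simp
  have const: "8 * (8 * s)\<^sup>2 * (exp (c0 / 2) * c0) * l\<^sup>2 = subexp_const * l\<^sup>2 * s\<^sup>2"
    by (simp add: subexp_const_def c0_def power2_eq_square)
  show "expectation (\<lambda>\<omega>. exp (l * (Y1 \<omega> * Y2 \<omega> - \<mu>))) \<le> exp (subexp_const * l\<^sup>2 * s\<^sup>2)"
    using mgf(2)[unfolded const] s by simp
qed

end

section \<open>Bernstein's inequality\<close>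

text \<open>Chosen so that \<open>bernstein_const / 16 - subexp_const / 256 = 12\<close>: the tail \<open>d\<^sup>-\<^sup>1\<^sup>2\<close>
  survives a union bound over \<open>d\<^sup>2\<close> entries as \<open>d\<^sup>-\<^sup>1\<^sup>0\<close>.\<close>
definition bernstein_const :: real where
  "bernstein_const = 192 + subexp_const / 16"

lemma bernstein_const_pos: "bernstein_const > 0"
  using subexp_const_pos by (simp add: bernstein_const_def)

context prob_space
begin

lemma indep_sum_ge_le_exp:
  fixes X :: "'i \<Rightarrow> 'a \<Rightarrow> real" and l a B :: real
  assumes fin: "finite I" and indep: "indep_vars (\<lambda>_. borel) X I" and l: "l > 0"
    and int: "\<And>k. k \<in> I \<Longrightarrow> integrable M (\<lambda>\<omega>. exp (l * X k \<omega>))"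
    and mgf: "\<And>k. k \<in> I \<Longrightarrow> expectation (\<lambda>\<omega>. exp (l * X k \<omega>)) \<le> exp B"
  shows "prob {\<omega> \<in> space M. (\<Sum>k\<in>I. X k \<omega>) \<ge> a} \<le> exp (card I * B - l * a)"
proof -
  have indep_exp: "indep_vars (\<lambda>_. borel) (\<lambda>k \<omega>. exp (l * X k \<omega>)) I"
    by (rule indep_vars_compose2[OF indep]) measurable
  have int_prod: "integrable M (\<lambda>\<omega>. \<Prod>k\<in>I. exp (l * X k \<omega>))"
    using int by (intro indep_vars_integrable[OF fin indep_exp]) auto
  have "expectation (\<lambda>\<omega>. \<Prod>k\<in>I. exp (l * X k \<omega>)) = (\<Prod>k\<in>I. expectation (\<lambda>\<omega>. exp (l * X k \<omega>)))"
    using int by (intro indep_vars_lebesgue_integral[OF fin indep_exp]) auto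
  also have "\<dots> \<le> (\<Prod>k\<in>I. exp B)"
    using mgf by (intro prod_mono) (auto intro: integral_nonneg_AE)
  also have "\<dots> = exp (card I * B)"
    by (simp add: exp_of_nat_mult)
  finally have exp_prod: "expectation (\<lambda>\<omega>. \<Prod>k\<in>I. exp (l * X k \<omega>)) \<le> exp (card I * B)" .
  have "{\<omega> \<in> space M. (\<Sum>k\<in>I. X k \<omega>) \<ge> a} = {\<omega> \<in> space M. (\<Prod>k\<in>I. exp (l * X k \<omega>)) \<ge> exp (l * a)}"
    using l by (auto simp: exp_sum[OF fin, symmetric] sum_distrib_left[symmetric])
  also have "prob \<dots> \<le> expectation (\<lambda>\<omega>. \<Prod>k\<in>I. exp (l * X k \<omega>)) / exp (l * a)"
    by (rule integral_Markov_inequality_measure[OF int_prod, of "space M"])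
      (auto intro!: AE_I2 prod_nonneg)
  also have "\<dots> \<le> exp (card I * B) / exp (l * a)"
    using exp_prod by (simp add: divide_right_mono)
  finally show ?thesis
    by (simp add: exp_diff)
qed

lemma indep_sum_ge_bernstein:
  fixes X :: "nat \<Rightarrow> 'a \<Rightarrow> real" and s L \<tau> :: real
  assumes indep: "indep_vars (\<lambda>_. borel) X {..<n}" and s: "s > 0" and n: "n > 0" and L: "L > 0"
    and mgf: "\<And>k l. k < n \<Longrightarrow> \<bar>l\<bar> \<le> 1 / (16 * s) \<Longrightarrow>
      integrable M (\<lambda>\<omega>. exp (l * X k \<omega>)) \<and> expectation (\<lambda>\<omega>. exp (l * X k \<omega>)) \<le> exp (subexp_const * l\<^sup>2 * s\<^sup>2)"
    and \<tau>: "\<tau> \<ge> bernstein_const * s * (sqrt (L / n) + L / n)"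
  shows "prob {\<omega> \<in> space M. (\<Sum>k<n. X k \<omega>) \<ge> n * \<tau>} \<le> exp (- 12 * L)"
proof -
  define r where "r = sqrt (L / n)"
  define m where "m = min r 1"
  \<comment> \<open>the optimal \<open>l = r / (16 s)\<close>, truncated to the range where the moment bound holds\<close>
  define l where "l = m / (16 * s)"
  have r: "r > 0" "n * r\<^sup>2 = L" "\<tau> \<ge> bernstein_const * s * (r + r\<^sup>2)"
    using L n \<tau> by (simp_all add: r_def)
  have m_pos: "m > 0" and "m \<le> r"
    using r(1) by (auto simp: m_def)
  hence m_sq: "m\<^sup>2 \<le> r\<^sup>2"
    by (intro power_mono) auto
  have "r\<^sup>2 \<le> m * (r + r\<^sup>2)"
  proof (cases "r \<le> 1")
    case True
    thus ?thesis using r(1) by (simp add: m_def distrib_left power2_eq_square)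
  next
    case False
    thus ?thesis by (simp add: m_def)
  qed
  note m = m_pos m_sq this
  have l: "l > 0" "\<bar>l\<bar> \<le> 1 / (16 * s)"
    using m(1) s by (auto simp: l_def m_def divide_right_mono)
  note const_pos = bernstein_const_pos subexp_const_pos
  have "l * (n * \<tau>) \<ge> l * n * (bernstein_const * s * (r + r\<^sup>2))"
    using r(3) l(1) by (simp add: mult_left_mono)
  also have "l * n * (bernstein_const * s * (r + r\<^sup>2)) = bernstein_const / 16 * n * (m * (r + r\<^sup>2))"
    using s by (simp add: l_def)
  also have "\<dots> \<ge> bernstein_const / 16 * L"
    using mult_left_mono[OF m(3), of "bernstein_const / 16 * n"] const_pos r(2) by (simp add: ac_simps)
  also have "bernstein_const / 16 * L = 12 * L + subexp_const / 256 * L"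
    by (simp add: bernstein_const_def algebra_simps)
  finally have drift: "l * (n * \<tau>) \<ge> 12 * L + subexp_const / 256 * L" .
  have "n * (subexp_const * l\<^sup>2 * s\<^sup>2) = subexp_const / 256 * (n * m\<^sup>2)"
    using s by (simp add: l_def power_divide power_mult_distrib)
  also have "\<dots> \<le> subexp_const / 256 * L"
    using mult_left_mono[OF m(2), of n] const_pos r(2) by (intro mult_left_mono) auto
  finally have variance: "n * (subexp_const * l\<^sup>2 * s\<^sup>2) \<le> subexp_const / 256 * L" .
  have "prob {\<omega> \<in> space M. (\<Sum>k<n. X k \<omega>) \<ge> n * \<tau>} \<le> exp (n * (subexp_const * l\<^sup>2 * s\<^sup>2) - l * (n * \<tau>))"
    using mgf l by (intro indep_sum_ge_le_exp[where I = "{..<n}", simplified, OF indep]) auto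
  also have "\<dots> \<le> exp (- 12 * L)"
    using drift variance by simp
  finally show ?thesis .
qed

lemma indep_sum_abs_gt_bernstein:
  fixes X :: "nat \<Rightarrow> 'a \<Rightarrow> real" and s L \<tau> :: real
  assumes indep: "indep_vars (\<lambda>_. borel) X {..<n}" and s: "s > 0" and n: "n > 0" and L: "L > 0"
    and mgf: "\<And>k l. k < n \<Longrightarrow> \<bar>l\<bar> \<le> 1 / (16 * s) \<Longrightarrow>
      integrable M (\<lambda>\<omega>. exp (l * X k \<omega>)) \<and> expectation (\<lambda>\<omega>. exp (l * X k \<omega>)) \<le> exp (subexp_const * l\<^sup>2 * s\<^sup>2)"
    and \<tau>: "\<tau> \<ge> bernstein_const * s * (sqrt (L / n) + L / n)"
  shows "prob {\<omega> \<in> space M. \<bar>\<Sum>k<n. X k \<omega>\<bar> > n * \<tau>} \<le> 2 * exp (- 12 * L)"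
proof -
  have [measurable]: "X k \<in> borel_measurable M" if "k < n" for k
    using indep that by (auto simp: indep_vars_def)
  have indep_neg: "indep_vars (\<lambda>_. borel) (\<lambda>k \<omega>. - X k \<omega>) {..<n}"
    by (rule indep_vars_compose2[OF indep]) measurable
  have upper: "prob {\<omega> \<in> space M. (\<Sum>k<n. X k \<omega>) \<ge> n * \<tau>} \<le> exp (- 12 * L)"
    by (rule indep_sum_ge_bernstein[OF indep s n L mgf \<tau>])
  have lower: "prob {\<omega> \<in> space M. (\<Sum>k<n. - X k \<omega>) \<ge> n * \<tau>} \<le> exp (- 12 * L)"
    using mgf[of _ "- _"] by (intro indep_sum_ge_bernstein[OF indep_neg s n L _ \<tau>]) auto
  have "prob {\<omega> \<in> space M. \<bar>\<Sum>k<n. X k \<omega>\<bar> > n * \<tau>}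
      \<le> prob ({\<omega> \<in> space M. (\<Sum>k<n. X k \<omega>) \<ge> n * \<tau>} \<union> {\<omega> \<in> space M. (\<Sum>k<n. - X k \<omega>) \<ge> n * \<tau>})"
    by (rule finite_measure_mono) (auto simp: sum_negf)
  also have "\<dots> \<le> prob {\<omega> \<in> space M. (\<Sum>k<n. X k \<omega>) \<ge> n * \<tau>} + prob {\<omega> \<in> space M. (\<Sum>k<n. - X k \<omega>) \<ge> n * \<tau>}"
    by (rule measure_Un_le) measurable
  finally show ?thesis
    using upper lower by simp
qed

end

lemma (in finite_measure) measure_gt_le_of_gt:
  fixes f :: "'a \<Rightarrow> real"
  assumes [measurable]: "f \<in> borel_measurable M"
    and le: "\<And>\<tau>. \<tau> > \<tau>\<^sub>0 \<Longrightarrow> measure M {x \<in> space M. f x > \<tau>} \<le> c"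
  shows "measure M {x \<in> space M. f x > \<tau>\<^sub>0} \<le> c"
proof -
  define A where "A m = {x \<in> space M. f x > \<tau>\<^sub>0 + 1 / Suc m}" for m
  have "incseq A"
    by (rule incseq_SucI) (auto simp: A_def frac_le elim!: le_less_trans[rotated])
  hence "(\<lambda>m. measure M (A m)) \<longlonglongrightarrow> measure M (\<Union>m. A m)"
    by (rule finite_Lim_measure_incseq[rotated]) (auto simp: A_def)
  moreover have "(\<Union>m. A m) = {x \<in> space M. f x > \<tau>\<^sub>0}"
  proof (intro equalityI subsetI)
    fix x assume x: "x \<in> {x \<in> space M. f x > \<tau>\<^sub>0}"
    then obtain m where "inverse (real (Suc m)) < f x - \<tau>\<^sub>0"
      using reals_Archimedean[of "f x - \<tau>\<^sub>0"] by auto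
    thus "x \<in> (\<Union>m. A m)"
      using x by (auto simp: A_def inverse_eq_divide intro!: exI[of _ m])
  qed (auto simp: A_def intro: add_pos_pos le_less_trans[rotated])
  moreover have "measure M (A m) \<le> c" for m
    unfolding A_def by (rule le) simp
  ultimately show ?thesis
    by (metis LIMSEQ_le_const2)
qed

section \<open>Entrywise perturbation bound\<close>

definition gram_error :: "nat \<Rightarrow> real mat \<Rightarrow> real mat \<Rightarrow> real mat \<Rightarrow> real mat" where
  "gram_error n S M X = (transpose_mat X * X - of_nat n \<cdot>\<^sub>m S)
     + (transpose_mat M * M + transpose_mat M * X + transpose_mat X * M)"

lemma transpose_mult_entry:
  assumes "A \<in> carrier_mat n d" "C \<in> carrier_mat n d'" "i < d" "j < d'"
  shows "(transpose_mat A * C) $$ (i, j) = (\<Sum>k<n. A $$ (k, i) * C $$ (k, j))"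
  using assms by (simp add: scalar_prod_def lessThan_atLeast0)

lemma abs_transpose_mult_entry_le:
  assumes "A \<in> carrier_mat n d" "C \<in> carrier_mat n d'" "i < d" "j < d'"
  shows "\<bar>(transpose_mat A * C) $$ (i, j)\<bar> \<le> L2_set (\<lambda>k. A $$ (k, i)) {..<n} * L2_set (\<lambda>k. C $$ (k, j)) {..<n}"
proof -
  have "\<bar>\<Sum>k<n. A $$ (k, i) * C $$ (k, j)\<bar> \<le> (\<Sum>k<n. \<bar>A $$ (k, i)\<bar> * \<bar>C $$ (k, j)\<bar>)"
    by (rule order_trans[OF sum_abs]) (simp add: abs_mult)
  also have "\<dots> \<le> L2_set (\<lambda>k. A $$ (k, i)) {..<n} * L2_set (\<lambda>k. C $$ (k, j)) {..<n}"
    by (rule L2_set_mult_ineq)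
  finally show ?thesis
    unfolding transpose_mult_entry[OF assms] .
qed

lemma L2_set_column_le_norm_1to2:
  assumes "M \<in> carrier_mat n d" "j < d"
  shows "L2_set (\<lambda>k. M $$ (k, j)) {..<n} \<le> norm_1to2 M"
proof -
  have "{sqrt (\<Sum>i<dim_row M. (M $$ (i, j))\<^sup>2) | j. j < dim_col M} = (\<lambda>j. L2_set (\<lambda>k. M $$ (k, j)) {..<n}) ` {..<d}"
    using assms by (auto simp: L2_set_def)
  thus ?thesis
    unfolding norm_1to2_def using assms by (auto intro: Max_ge)
qed

lemma L2_set_column_square:
  assumes "X \<in> carrier_mat n d" "j < d"
  shows "(L2_set (\<lambda>k. X $$ (k, j)) {..<n})\<^sup>2 = (transpose_mat X * X) $$ (j, j)"
  unfolding transpose_mult_entry[OF assms(1,1,2,2)]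
  by (simp add: L2_set_def sum_nonneg power2_eq_square)

lemma gram_error_entry:
  assumes X: "X \<in> carrier_mat n d" and M: "M \<in> carrier_mat n d" and S: "S \<in> carrier_mat d d"
    and ij: "i < d" "j < d"
  shows "gram_error n S M X $$ (i, j) = (transpose_mat X * X - of_nat n \<cdot>\<^sub>m S) $$ (i, j)
     + (transpose_mat M * M) $$ (i, j) + (transpose_mat M * X) $$ (i, j) + (transpose_mat X * M) $$ (i, j)"
  using assms by (simp add: gram_error_def)

lemma abs_gram_error_entry_le:
  assumes X: "X \<in> carrier_mat n d" and M: "M \<in> carrier_mat n d" and S: "S \<in> carrier_mat d d"
    and b: "norm_1to2 M \<le> b" and ij: "i < d" "j < d"
    and dev: "\<And>i j. i < d \<Longrightarrow> j < d \<Longrightarrow> \<bar>(transpose_mat X * X - of_nat n \<cdot>\<^sub>m S) $$ (i, j)\<bar> \<le> n * t"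
    and diag: "\<And>j. j < d \<Longrightarrow> S $$ (j, j) \<le> D"
  shows "\<bar>gram_error n S M X $$ (i, j)\<bar> \<le> n * t + b\<^sup>2 + 2 * b * sqrt (n * (t + D))"
proof -
  have col_M: "L2_set (\<lambda>k. M $$ (k, j)) {..<n} \<le> b" if "j < d" for j
    using L2_set_column_le_norm_1to2[OF M that] b by linarith
  have col_X: "L2_set (\<lambda>k. X $$ (k, j)) {..<n} \<le> sqrt (n * (t + D))" if "j < d" for j
  proof -
    have "(transpose_mat X * X - of_nat n \<cdot>\<^sub>m S) $$ (j, j) = (transpose_mat X * X) $$ (j, j) - n * S $$ (j, j)"
      using X S that by simp
    hence "(L2_set (\<lambda>k. X $$ (k, j)) {..<n})\<^sup>2 \<le> n * S $$ (j, j) + n * t"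
      using dev[OF that that] L2_set_column_square[OF X that] by (simp add: abs_le_iff)
    also have "\<dots> \<le> n * (t + D)"
      using mult_left_mono[OF diag[OF that], of n] by (simp add: distrib_left)
    finally show ?thesis
      by (rule real_le_rsqrt)
  qed
  have b0: "b \<ge> 0"
    using col_M[OF ij(1)] L2_set_nonneg[of "\<lambda>k. M $$ (k, i)" "{..<n}"] by linarith
  have sqrt0: "sqrt (n * (t + D)) \<ge> 0"
    using col_X[OF ij(1)] L2_set_nonneg[of "\<lambda>k. X $$ (k, i)" "{..<n}"] by linarith
  have "\<bar>(transpose_mat M * M) $$ (i, j)\<bar> \<le> b * b"
    by (rule order_trans[OF abs_transpose_mult_entry_le[OF M M ij]
          mult_mono[OF col_M[OF ij(1)] col_M[OF ij(2)] b0 L2_set_nonneg]])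
  moreover have "\<bar>(transpose_mat M * X) $$ (i, j)\<bar> \<le> b * sqrt (n * (t + D))"
    by (rule order_trans[OF abs_transpose_mult_entry_le[OF M X ij]
          mult_mono[OF col_M[OF ij(1)] col_X[OF ij(2)] b0 L2_set_nonneg]])
  moreover have "\<bar>(transpose_mat X * M) $$ (i, j)\<bar> \<le> b * sqrt (n * (t + D))"
    unfolding mult.commute[of b]
    by (rule order_trans[OF abs_transpose_mult_entry_le[OF X M ij]
          mult_mono[OF col_X[OF ij(1)] col_M[OF ij(2)] sqrt0 L2_set_nonneg]])
  moreover have "\<bar>gram_error n S M X $$ (i, j)\<bar> \<le> \<bar>(transpose_mat X * X - of_nat n \<cdot>\<^sub>m S) $$ (i, j)\<bar>
      + \<bar>(transpose_mat M * M) $$ (i, j)\<bar> + \<bar>(transpose_mat M * X) $$ (i, j)\<bar> + \<bar>(transpose_mat X * M) $$ (i, j)\<bar>"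
  proof -
    have "\<bar>a + b + c + e\<bar> \<le> \<bar>a\<bar> + \<bar>b\<bar> + \<bar>c\<bar> + \<bar>e\<bar>" for a b c e :: real
      by arith
    thus ?thesis
      unfolding gram_error_entry[OF X M S ij] .
  qed
  ultimately show ?thesis
    using dev[OF ij] unfolding power2_eq_square by linarith
qed

lemma Max_abs_entries_le:
  assumes "d > 0" "\<And>i j. i < d \<Longrightarrow> j < d \<Longrightarrow> \<bar>A $$ (i, j)\<bar> \<le> c"
  shows "Max {\<bar>A $$ (i, j)\<bar> | i j. i < d \<and> j < d} \<le> c"
proof -
  have "{\<bar>A $$ (i, j)\<bar> | i j. i < d \<and> j < d} = (\<lambda>(i, j). \<bar>A $$ (i, j)\<bar>) ` ({..<d} \<times> {..<d})"
    by auto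
  thus ?thesis
    using assms by (intro Max.boundedI) auto
qed

lemma diag_le_Max:
  assumes "j < d"
  shows "S $$ (j, j) \<le> Max {S $$ (i, i) | i. i < d}"
proof -
  have "{S $$ (i, i) | i. i < d} = (\<lambda>i. S $$ (i, i)) ` {..<d}"
    by auto
  thus ?thesis
    using assms by auto
qed

lemma gram_error_bound:
  assumes X: "X \<in> carrier_mat n d" and M: "M \<in> carrier_mat n d" and S: "S \<in> carrier_mat d d"
    and b: "norm_1to2 M \<le> b" and n: "n > 0" and d: "d > 0"
    and dev: "\<And>i j. i < d \<Longrightarrow> j < d \<Longrightarrow> \<bar>(transpose_mat X * X - of_nat n \<cdot>\<^sub>m S) $$ (i, j)\<bar> \<le> n * t"
  shows "(1 / real n) * Max {\<bar>gram_error n S M X $$ (i, j)\<bar> | i j. i < d \<and> j < d}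
    \<le> t + b\<^sup>2 / n + 2 * b / sqrt n * sqrt (t + Max {S $$ (i, i) | i. i < d})"
proof -
  define D where "D = Max {S $$ (i, i) | i. i < d}"
  have "\<bar>gram_error n S M X $$ (i, j)\<bar> \<le> n * t + b\<^sup>2 + 2 * b * sqrt (n * (t + D))"
    if "i < d" "j < d" for i j
    unfolding D_def by (rule abs_gram_error_entry_le[OF X M S b that dev diag_le_Max])
  hence "Max {\<bar>gram_error n S M X $$ (i, j)\<bar> | i j. i < d \<and> j < d} \<le> n * t + b\<^sup>2 + 2 * b * sqrt (n * (t + D))"
    by (rule Max_abs_entries_le[OF d])
  hence "(1 / real n) * Max {\<bar>gram_error n S M X $$ (i, j)\<bar> | i j. i < d \<and> j < d}
      \<le> (n * t + b\<^sup>2 + 2 * b * (sqrt n * sqrt (t + D))) / n"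
    using n by (simp add: real_sqrt_mult divide_right_mono)
  also have "\<dots> = t + b\<^sup>2 / n + 2 * b * sqrt (t + D) * (sqrt n / n)"
    using n by (simp add: add_divide_distrib ac_simps)
  also have "\<dots> = t + b\<^sup>2 / n + 2 * b / sqrt n * sqrt (t + D)"
    unfolding sqrt_divide_self_eq[OF of_nat_0_le_iff] by (simp add: divide_inverse ac_simps)
  finally show ?thesis
    unfolding D_def .
qed

section \<open>Random matrices with independent sub-Gaussian rows\<close>

locale subgaussian_row_model = prob_space P for P :: "'a measure" +
  fixes n d :: nat and B :: "'a \<Rightarrow> real mat" and S :: "real mat" and \<sigma> :: real
  assumes B_carrier: "\<And>\<omega>. \<omega> \<in> space P \<Longrightarrow> B \<omega> \<in> carrier_mat n d"
    and S_carrier: "S \<in> carrier_mat d d"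
    and indep_rows: "indep_vars (\<lambda>_. PiM {..<d} (\<lambda>_. borel)) (row_rv B d) {..<n}"
    and mean_zero: "\<And>k j. k < n \<Longrightarrow> j < d \<Longrightarrow> expectation (\<lambda>\<omega>. B \<omega> $$ (k, j)) = 0"
    and covariance_integrable: "\<And>k i j. k < n \<Longrightarrow> i < d \<Longrightarrow> j < d \<Longrightarrow>
      integrable P (\<lambda>\<omega>. B \<omega> $$ (k, i) * B \<omega> $$ (k, j))"
    and covariance: "\<And>k i j. k < n \<Longrightarrow> i < d \<Longrightarrow> j < d \<Longrightarrow>
      expectation (\<lambda>\<omega>. B \<omega> $$ (k, i) * B \<omega> $$ (k, j)) = S $$ (i, j)"
    and subgaussian_rows: "\<And>k u. k < n \<Longrightarrow> (\<Sum>j<d. (u j)\<^sup>2) = 1 \<Longrightarrow>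
      subgaussian P (\<lambda>\<omega>. \<Sum>j<d. u j * B \<omega> $$ (k, j)) (\<sigma>\<^sup>2)"
begin

lemma entry_subgaussian:
  assumes "k < n" "j < d"
  shows "subgaussian P (\<lambda>\<omega>. B \<omega> $$ (k, j)) (\<sigma>\<^sup>2)"
proof -
  define u :: "nat \<Rightarrow> real" where "u l = (if l = j then 1 else 0)" for l
  have "(\<Sum>l<d. (u l)\<^sup>2) = (\<Sum>l<d. if l = j then 1 else 0)"
    by (rule sum.cong) (auto simp: u_def)
  also have "\<dots> = 1"
    using assms by simp
  finally have "subgaussian P (\<lambda>\<omega>. \<Sum>l<d. u l * B \<omega> $$ (k, l)) (\<sigma>\<^sup>2)"
    using subgaussian_rows assms by blast
  moreover have "(\<Sum>l<d. u l * B \<omega> $$ (k, l)) = B \<omega> $$ (k, j)" for \<omega>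
    using assms by (simp add: u_def if_distrib[of "\<lambda>x. x * _"] cong: if_cong)
  ultimately show ?thesis
    by simp
qed

lemma entry_measurable:
  "k < n \<Longrightarrow> j < d \<Longrightarrow> (\<lambda>\<omega>. B \<omega> $$ (k, j)) \<in> borel_measurable P"
  using entry_subgaussian by (rule subgaussian_measurable)

lemma gram_summands_indep:
  assumes "i < d" "j < d"
  shows "indep_vars (\<lambda>_. borel) (\<lambda>k \<omega>. B \<omega> $$ (k, i) * B \<omega> $$ (k, j) - S $$ (i, j)) {..<n}"
proof -
  have "(\<lambda>x. x i * x j - S $$ (i, j)) \<in> borel_measurable (PiM {..<d} (\<lambda>_. borel))"
    using assms by (auto intro!: borel_measurable_diff borel_measurable_times measurable_component_singleton)
  hence "indep_vars (\<lambda>_. borel) (\<lambda>k \<omega>. row_rv B d k \<omega> i * row_rv B d k \<omega> j - S $$ (i, j)) {..<n}"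
    by (intro indep_vars_compose2[OF indep_rows, where Y = "\<lambda>_ x. x i * x j - S $$ (i, j)"])
  thus ?thesis
    using assms by (simp add: row_rv_def)
qed

lemma gram_summand_mgf:
  assumes "k < n" "i < d" "j < d" and s: "s > 0" "\<sigma>\<^sup>2 \<le> s" and l: "\<bar>l\<bar> \<le> 1 / (16 * s)"
  shows "integrable P (\<lambda>\<omega>. exp (l * (B \<omega> $$ (k, i) * B \<omega> $$ (k, j) - S $$ (i, j))))
    \<and> expectation (\<lambda>\<omega>. exp (l * (B \<omega> $$ (k, i) * B \<omega> $$ (k, j) - S $$ (i, j)))) \<le> exp (subexp_const * l\<^sup>2 * s\<^sup>2)"
  using subgaussian_product_mgf_le[OF subgaussian_mono[OF entry_subgaussian s(2)]
      subgaussian_mono[OF entry_subgaussian s(2)] mean_zero mean_zero s(1) covariance_integrable l]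
    covariance assms
  by simp

lemma gram_deviation_entry:
  assumes "\<omega> \<in> space P" "i < d" "j < d"
  shows "(transpose_mat (B \<omega>) * B \<omega> - of_nat n \<cdot>\<^sub>m S) $$ (i, j)
    = (\<Sum>k<n. B \<omega> $$ (k, i) * B \<omega> $$ (k, j) - S $$ (i, j))"
  using assms B_carrier[OF assms(1)] S_carrier
  by (simp add: transpose_mult_entry[symmetric] sum_subtractf)

lemma gram_deviation_entry_measurable:
  assumes "i < d" "j < d"
  shows "(\<lambda>\<omega>. (transpose_mat (B \<omega>) * B \<omega> - of_nat n \<cdot>\<^sub>m S) $$ (i, j)) \<in> borel_measurable P"
  using assms gram_deviation_entry
  by (subst measurable_cong[where g = "\<lambda>\<omega>. \<Sum>k<n. B \<omega> $$ (k, i) * B \<omega> $$ (k, j) - S $$ (i, j)"])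
    (auto intro!: borel_measurable_sum borel_measurable_diff borel_measurable_times entry_measurable)

lemma gram_deviation_tail:
  fixes L \<tau> :: real
  assumes ij: "i < d" "j < d" and n: "n > 0" and L: "L > 0"
    and \<tau>: "\<tau> \<ge> bernstein_const * \<sigma>\<^sup>2 * (sqrt (L / n) + L / n)"
  shows "prob {\<omega> \<in> space P. \<bar>(transpose_mat (B \<omega>) * B \<omega> - of_nat n \<cdot>\<^sub>m S) $$ (i, j)\<bar> > n * \<tau>}
    \<le> 2 * exp (- 12 * L)"
proof (rule measure_gt_le_of_gt)
  show "(\<lambda>\<omega>. \<bar>(transpose_mat (B \<omega>) * B \<omega> - of_nat n \<cdot>\<^sub>m S) $$ (i, j)\<bar>) \<in> borel_measurable P"
    using gram_deviation_entry_measurable[OF ij] by measurable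
next
  fix \<tau>' assume \<tau>': "\<tau>' > n * \<tau>"
  define r where "r = sqrt (L / n) + L / n"
  define s where "s = \<tau>' / (n * bernstein_const * r)"
  have pos: "r > 0" "bernstein_const > 0"
    using L n bernstein_const_pos by (simp_all add: r_def add_pos_nonneg)
  \<comment> \<open>every threshold above \<open>n \<tau>\<close> is the exact Bernstein threshold of some proxy \<open>s \<ge> \<sigma>\<^sup>2\<close>,
    \<open>s > 0\<close>; this also covers \<open>\<sigma> = 0\<close>\<close>
  have "n * (bernstein_const * \<sigma>\<^sup>2 * r) < \<tau>'"
    using \<tau>' mult_left_mono[OF \<tau>, of n] by (simp add: r_def)
  hence s: "s > 0" "\<sigma>\<^sup>2 \<le> s"
    using pos n by (auto simp: s_def field_simps intro: le_less_trans[rotated])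
  have "\<tau>' / n \<ge> bernstein_const * s * (sqrt (L / n) + L / n)"
    using pos n by (simp add: s_def r_def[symmetric])
  hence "prob {\<omega> \<in> space P. \<bar>\<Sum>k<n. B \<omega> $$ (k, i) * B \<omega> $$ (k, j) - S $$ (i, j)\<bar> > n * (\<tau>' / n)}
      \<le> 2 * exp (- 12 * L)"
    using gram_summand_mgf ij s
    by (intro indep_sum_abs_gt_bernstein[OF gram_summands_indep[OF ij] s(1) n L]) auto
  also have "{\<omega> \<in> space P. \<bar>\<Sum>k<n. B \<omega> $$ (k, i) * B \<omega> $$ (k, j) - S $$ (i, j)\<bar> > n * (\<tau>' / n)}
      = {\<omega> \<in> space P. \<bar>(transpose_mat (B \<omega>) * B \<omega> - of_nat n \<cdot>\<^sub>m S) $$ (i, j)\<bar> > \<tau>'}"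
    using n gram_deviation_entry[OF _ ij] by auto
  finally show "prob {\<omega> \<in> space P. \<bar>(transpose_mat (B \<omega>) * B \<omega> - of_nat n \<cdot>\<^sub>m S) $$ (i, j)\<bar> > \<tau>'}
      \<le> 2 * exp (- 12 * L)" .
qed

lemma gram_deviation_prob:
  assumes n: "n > 0" and d: "d \<ge> 2"
  defines "t \<equiv> bernstein_const * \<sigma>\<^sup>2 * (sqrt (ln d / n) + ln d / n)"
  shows "prob {\<omega> \<in> space P. \<exists>i<d. \<exists>j<d. \<bar>(transpose_mat (B \<omega>) * B \<omega> - of_nat n \<cdot>\<^sub>m S) $$ (i, j)\<bar> > real n * t}
    \<le> 2 * real d powr (- 10)"
proof -
  have [measurable]: "(\<lambda>\<omega>. (transpose_mat (B \<omega>) * B \<omega> - of_nat n \<cdot>\<^sub>m S) $$ p) \<in> borel_measurable P"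
    if "p \<in> {..<d} \<times> {..<d}" for p
    using that gram_deviation_entry_measurable by auto
  have "prob {\<omega> \<in> space P. \<exists>i<d. \<exists>j<d. \<bar>(transpose_mat (B \<omega>) * B \<omega> - of_nat n \<cdot>\<^sub>m S) $$ (i, j)\<bar> > n * t}
      = prob (\<Union>p\<in>{..<d} \<times> {..<d}. {\<omega> \<in> space P. \<bar>(transpose_mat (B \<omega>) * B \<omega> - of_nat n \<cdot>\<^sub>m S) $$ p\<bar> > n * t})"
    by (rule arg_cong[where f = prob]) auto
  also have "\<dots> \<le> (\<Sum>p\<in>{..<d} \<times> {..<d}. prob {\<omega> \<in> space P. \<bar>(transpose_mat (B \<omega>) * B \<omega> - of_nat n \<cdot>\<^sub>m S) $$ p\<bar> > n * t})"
    by (intro finite_measure_subadditive_finite) auto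
  also have "\<dots> \<le> (\<Sum>p\<in>{..<d} \<times> {..<d}. 2 * exp (- 12 * ln d))"
  proof (intro sum_mono)
    fix p assume "p \<in> {..<d} \<times> {..<d}"
    then obtain i j where ij: "p = (i, j)" "i < d" "j < d"
      by blast
    show "prob {\<omega> \<in> space P. \<bar>(transpose_mat (B \<omega>) * B \<omega> - of_nat n \<cdot>\<^sub>m S) $$ p\<bar> > n * t}
        \<le> 2 * exp (- 12 * ln d)"
      unfolding ij(1) using ij(2,3) n d by (intro gram_deviation_tail) (auto simp: t_def)
  qed
  also have "\<dots> = 2 * ((real d)\<^sup>2 * real d powr (- 12))"
    using d by (simp add: powr_def power2_eq_square)
  also have "(real d)\<^sup>2 * real d powr (- 12) = real d powr (- 10)"
  proof -
    have "real d powr (- 10) = real d powr 2 * real d powr (- 12)"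
      by (subst powr_add[symmetric]) simp
    moreover have "real d powr 2 = (real d)\<^sup>2"
      using d by (simp add: powr_numeral)
    ultimately show ?thesis
      by simp
  qed
  finally show ?thesis .
qed

lemma max_abs_gram_error_measurable:
  assumes M: "M \<in> carrier_mat n d"
  shows "(\<lambda>\<omega>. Max {\<bar>gram_error n S M (B \<omega>) $$ (i, j)\<bar> | i j. i < d \<and> j < d}) \<in> borel_measurable P"
proof -
  have entry: "(\<lambda>\<omega>. gram_error n S M (B \<omega>) $$ p) \<in> borel_measurable P"
    if "p \<in> {..<d} \<times> {..<d}" for p
  proof -
    have "gram_error n S M (B \<omega>) $$ p = (transpose_mat (B \<omega>) * B \<omega> - of_nat n \<cdot>\<^sub>m S) $$ p
      + (\<Sum>k<n. M $$ (k, fst p) * M $$ (k, snd p)) + (\<Sum>k<n. M $$ (k, fst p) * B \<omega> $$ (k, snd p))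
      + (\<Sum>k<n. B \<omega> $$ (k, fst p) * M $$ (k, snd p))" if "\<omega> \<in> space P" for \<omega>
      using B_carrier[OF that] M S_carrier \<open>p \<in> _\<close>
      by (auto simp: gram_error_entry transpose_mult_entry simp del: index_mult_mat)
    thus ?thesis
      using that gram_deviation_entry_measurable
      by (subst measurable_cong) (auto intro!: borel_measurable_add borel_measurable_sum
          borel_measurable_times entry_measurable)
  qed
  have "{\<bar>gram_error n S M (B \<omega>) $$ (i, j)\<bar> | i j. i < d \<and> j < d}
      = (\<lambda>p. \<bar>gram_error n S M (B \<omega>) $$ p\<bar>) ` ({..<d} \<times> {..<d})" for \<omega>
    by auto
  moreover have "(\<lambda>\<omega>. Max ((\<lambda>p. \<bar>gram_error n S M (B \<omega>) $$ p\<bar>) ` ({..<d} \<times> {..<d})))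
      \<in> borel_measurable P"
    using entry by (intro borel_measurable_Max borel_measurable_abs) auto
  ultimately show ?thesis
    by simp
qed

theorem gram_error_prob:
  assumes n: "n \<ge> 1" and d: "d \<ge> 2" and M: "M \<in> carrier_mat n d" and b: "norm_1to2 M \<le> b"
  defines "t \<equiv> bernstein_const * \<sigma>\<^sup>2 * (sqrt (ln d / n) + ln d / n)"
  shows "prob {\<omega> \<in> space P. (1 / real n) * Max {\<bar>gram_error n S M (B \<omega>) $$ (i, j)\<bar> | i j. i < d \<and> j < d}
      \<le> t + b\<^sup>2 / n + 2 * b / sqrt n * sqrt (t + Max {S $$ (i, i) | i. i < d})}
    \<ge> 1 - 2 * real d powr (- 10)"
    (is "prob ?good \<ge> _")
proof -
  define bad where "bad = {\<omega> \<in> space P. \<exists>i<d. \<exists>j<d.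
    \<bar>(transpose_mat (B \<omega>) * B \<omega> - of_nat n \<cdot>\<^sub>m S) $$ (i, j)\<bar> > n * t}"
  have "?good \<in> sets P"
    using max_abs_gram_error_measurable[OF M] by measurable
  moreover have "space P - bad \<subseteq> ?good"
  proof
    fix \<omega> assume \<omega>: "\<omega> \<in> space P - bad"
    have "\<bar>(transpose_mat (B \<omega>) * B \<omega> - of_nat n \<cdot>\<^sub>m S) $$ (i, j)\<bar> \<le> n * t"
      if "i < d" "j < d" for i j
      using \<omega> that unfolding bad_def by (blast intro: leI)
    hence "(1 / real n) * Max {\<bar>gram_error n S M (B \<omega>) $$ (i, j)\<bar> | i j. i < d \<and> j < d}
        \<le> t + b\<^sup>2 / n + 2 * b / sqrt n * sqrt (t + Max {S $$ (i, i) | i. i < d})"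
      using \<omega> n d by (intro gram_error_bound[OF B_carrier M S_carrier b]) auto
    thus "\<omega> \<in> ?good"
      using \<omega> by simp
  qed
  moreover have "prob bad \<le> 2 * real d powr (- 10)"
    using gram_deviation_prob n d unfolding bad_def t_def by simp
  moreover have "bad \<in> sets P"
    unfolding bad_def using gram_deviation_entry_measurable by measurable
  ultimately show ?thesis
    using finite_measure_mono[of "space P - bad" ?good] prob_compl[of bad] by linarith
qed

end

theorem lemma5:
  "\<exists>C>0. \<exists>C'>0. \<forall>(P :: 'a measure) (n::nat) (d::nat) (k::nat) (\<sigma>::real) (b::real)
       (M :: real mat) (\<Sigma> :: real mat) (B :: 'a \<Rightarrow> real mat).
     ( prob_space P \<and> n \<ge> 1 \<and> d \<ge> 2 \<and>
       M \<in> carrier_mat n d \<and> \<Sigma> \<in> carrier_mat d d \<and>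
       (\<forall>\<omega>\<in>space P. B \<omega> \<in> carrier_mat n d) \<and>
       \<comment> \<open>rows i.i.d.\<close>
       prob_space.indep_vars P (\<lambda>_. PiM {..<d} (\<lambda>_. borel)) (row_rv B d) {..<n} \<and>
       (\<forall>i<n. distr P (PiM {..<d} (\<lambda>_. borel)) (row_rv B d i)
                = distr P (PiM {..<d} (\<lambda>_. borel)) (row_rv B d 0)) \<and>
       \<comment> \<open>zero mean and covariance \<Sigma>\<close>
       (\<forall>i<n. \<forall>j<d. integrable P (\<lambda>\<omega>. B \<omega> $$ (i, j)) \<and>
                     prob_space.expectation P (\<lambda>\<omega>. B \<omega> $$ (i, j)) = 0) \<and>
       (\<forall>i<n. \<forall>j<d. \<forall>l<d. integrable P (\<lambda>\<omega>. B \<omega> $$ (i, j) * B \<omega> $$ (i, l)) \<and>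
                     prob_space.expectation P (\<lambda>\<omega>. B \<omega> $$ (i, j) * B \<omega> $$ (i, l)) = \<Sigma> $$ (j, l)) \<and>
       \<comment> \<open>sub-Gaussian rows with parameter \<sigma>^2\<close>
       (\<forall>i<n. \<forall>u::nat \<Rightarrow> real. (\<Sum>j<d. (u j)\<^sup>2) = 1 \<longrightarrow>
            subgaussian P (\<lambda>\<omega>. \<Sum>j<d. u j * B \<omega> $$ (i, j)) (\<sigma>\<^sup>2)) \<and>
       \<comment> \<open>column norm bound on M\<close>
       norm_1to2 M \<le> b \<and>
       \<comment> \<open>k-sparse unit top eigenvector and positive eigengap\<close>
       (\<exists>v \<in> carrier_vec d. (\<Sum>j<d. (v $ j)\<^sup>2) = 1 \<and> card {j. j < d \<and> v $ j \<noteq> 0} \<le> k \<and>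
            \<Sigma> *\<^sub>v v = eigenvalues_desc \<Sigma> ! 0 \<cdot>\<^sub>v v) \<and>
       eigenvalues_desc \<Sigma> ! 0 - eigenvalues_desc \<Sigma> ! 1 > 0 )
     \<longrightarrow>
     (let E = (\<lambda>\<omega>. (transpose_mat (B \<omega>) * B \<omega> - of_nat n \<cdot>\<^sub>m \<Sigma>)
                    + (transpose_mat M * M + transpose_mat M * B \<omega> + transpose_mat (B \<omega>) * M));
          t = C * \<sigma>\<^sup>2 * (sqrt (ln d / n) + ln d / n)
      in measure P {\<omega> \<in> space P.
            (1 / real n) * Max {\<bar>E \<omega> $$ (i, j)\<bar> | i j. i < d \<and> j < d}
              \<le> t + b\<^sup>2 / n + 2 * b / sqrt n * sqrt (t + Max {\<Sigma> $$ (i, i) | i. i < d})}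
         \<ge> 1 - C' * real d powr (-10))"
proof (rule exI[of _ bernstein_const], rule conjI[OF _ exI[of _ "2 :: real"]], goal_cases)
  case 1
  show ?case
    by (rule bernstein_const_pos)
next
  case 2
  show ?case
  proof (intro conjI allI impI, simp, elim conjE, goal_cases)
    case (1 P n d k \<sigma> b M \<Sigma> B)
    interpret subgaussian_row_model P n d B \<Sigma> \<sigma>
      using 1(6,9,10,11)
      by (intro subgaussian_row_model.intro subgaussian_row_model_axioms.intro 1(1,5,7)) blast+
    show ?case
      using gram_error_prob[OF 1(2,3,4,12)] by (simp only: Let_def gram_error_def)
  qed
qed

end
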